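(* Let $\mathcal{Q}\subseteq 2^E$ ($E$ finite) be a simplicial complex (a nonempty family closed under taking subsets). If $\mathcal{Q}$ is weakly Rayleigh then $\mathcal{Q}$ is the set of independent sets of a matroid on $E$.
   Context: For $\omega:2^E\to[0,\infty)$ not identically zero, $Z(\omega;\mathbf{y})=\sum_S\omega(S)\prod_{e\in S}y_e$; with subscripts denoting partial derivatives, $Z$ is Rayleigh if $Z_eZ_f-Z_{ef}Z\ge0$ for all distinct $e,f$ and all positive $\mathbf{y}$. $\mathcal{Q}$ is weakly Rayleigh if some $\omega\ge0$ with $\{S:\omega(S)>0\}=\mathcal{Q}$ has $Z(\omega;\mathbf{y})$ Rayleigh. *)

theory Defs
  imports "HOL-Analysis.Analysis"
begin

definition Zpoly :: "'a set \<Rightarrow> ('a set \<Rightarrow> real) \<Rightarrow> ('a \<Rightarrow> real) \<Rightarrow> real" where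
  "Zpoly E \<omega> y = (\<Sum>S\<in>Pow E. \<omega> S * (\<Prod>e\<in>S. y e))"

definition pderiv_var :: "'a \<Rightarrow> (('a \<Rightarrow> real) \<Rightarrow> real) \<Rightarrow> ('a \<Rightarrow> real) \<Rightarrow> real" where
  "pderiv_var e F y = deriv (\<lambda>t. F (y(e := t))) (y e)"

definition rayleigh :: "'a set \<Rightarrow> (('a \<Rightarrow> real) \<Rightarrow> real) \<Rightarrow> bool" where
  "rayleigh E Z \<longleftrightarrow>
     (\<forall>e\<in>E. \<forall>f\<in>E. e \<noteq> f \<longrightarrow>
        (\<forall>y. (\<forall>x\<in>E. y x > 0) \<longrightarrow>
           pderiv_var e Z y * pderiv_var f Z y
             - pderiv_var e (pderiv_var f Z) y * Z y \<ge> 0))"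

definition weakly_rayleigh :: "'a set \<Rightarrow> 'a set set \<Rightarrow> bool" where
  "weakly_rayleigh E Q \<longleftrightarrow>
     (\<exists>\<omega> :: 'a set \<Rightarrow> real.
        (\<forall>S\<in>Pow E. \<omega> S \<ge> 0) \<and>
        (\<exists>S\<in>Pow E. \<omega> S \<noteq> 0) \<and>
        {S\<in>Pow E. \<omega> S > 0} = Q \<and>
        rayleigh E (Zpoly E \<omega>))"

definition simplicial_complex :: "'a set \<Rightarrow> 'a set set \<Rightarrow> bool" where
  "simplicial_complex E Q \<longleftrightarrow>
     Q \<subseteq> Pow E \<and> Q \<noteq> {} \<and> (\<forall>S\<in>Q. \<forall>T. T \<subseteq> S \<longrightarrow> T \<in> Q)"

definition matroid_indep :: "'a set \<Rightarrow> 'a set set \<Rightarrow> bool" where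
  "matroid_indep E I \<longleftrightarrow>
     I \<subseteq> Pow E \<and> {} \<in> I \<and>
     (\<forall>S\<in>I. \<forall>T. T \<subseteq> S \<longrightarrow> T \<in> I) \<and>
     (\<forall>A\<in>I. \<forall>B\<in>I. card A < card B \<longrightarrow> (\<exists>x\<in>B - A. insert x A \<in> I))"

end

theory Submission
  imports Defs
begin

(*
  Suppose the exchange axiom fails. Among all violations A, B \<subseteq> X with A maximal in X
  (no x \<in> X - A has insert x A \<in> Q) take one with X as small as possible. Minimality forces
  every face that misses some x \<in> X - A to meet X in at most |A| elements, and B - A contains
  two elements e \<noteq> f.

  Deleting and contracting e and f splits Z = Z\<^sup>e\<^sup>f + y\<^sub>e Z\<^sup>f\<^sub>e + y\<^sub>f Z\<^sup>e\<^sub>f + y\<^sub>e y\<^sub>f Z\<^sub>e\<^sub>f, and the Rayleigh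
  difference Z\<^sub>e Z\<^sub>f - Z\<^sub>e\<^sub>f Z equals Z\<^sup>f\<^sub>e Z\<^sup>e\<^sub>f - Z\<^sup>e\<^sup>f Z\<^sub>e\<^sub>f. At y = t on X and y = 1 elsewhere, the
  two mixed parts have degree < |A| in t, while Z\<^sup>e\<^sup>f \<ge> \<omega>(A) t^|A| and
  Z\<^sub>e\<^sub>f \<ge> \<omega>(B) t^(|B|-2) \<ge> \<omega>(B) t^(|A|-1). Hence the difference is negative for large t.
*)

lemma sum_Pow_insert:
  assumes "finite A" "x \<notin> A"
  shows "(\<Sum>S\<in>Pow (insert x A). g S) = (\<Sum>S\<in>Pow A. g S + g (insert x S))"
proof -
  have inj: "inj_on (insert x) (Pow A)"
    using assms(2) by (intro inj_onI) (metis PowD Diff_insert_absorb subset_iff)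
  have "(\<Sum>S\<in>Pow (insert x A). g S) = (\<Sum>S\<in>Pow A. g S) + (\<Sum>S\<in>insert x ` Pow A. g S)"
    unfolding Pow_insert by (rule sum.union_disjoint) (use assms in auto)
  also have "(\<Sum>S\<in>insert x ` Pow A. g S) = (\<Sum>S\<in>Pow A. g (insert x S))"
    by (rule sum.reindex[OF inj, unfolded comp_def])
  finally show ?thesis by (simp add: sum.distrib)
qed

(* The weights whose generating polynomials are Z restricted to y\<^sub>e = 0 and \<partial>Z/\<partial>y\<^sub>e. *)
definition deletion :: "'a \<Rightarrow> ('a set \<Rightarrow> real) \<Rightarrow> 'a set \<Rightarrow> real" where
  "deletion e w S = (if e \<in> S then 0 else w S)"

definition contraction :: "'a \<Rightarrow> ('a set \<Rightarrow> real) \<Rightarrow> 'a set \<Rightarrow> real" where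
  "contraction e w S = (if e \<in> S then 0 else w (insert e S))"

lemma Zpoly_deletion_contraction:
  assumes "finite E" "e \<in> E"
  shows "Zpoly E w y = Zpoly E (deletion e w) y + y e * Zpoly E (contraction e w) y"
proof -
  have Pow_E: "(\<Sum>S\<in>Pow E. g S) = (\<Sum>S\<in>Pow (E - {e}). g S + g (insert e S))" for g
    using sum_Pow_insert[of "E - {e}" e g] assms by (simp add: insert_absorb)
  show ?thesis
    unfolding Zpoly_def Pow_E sum_distrib_left sum.distrib[symmetric]
  proof (intro sum.cong refl)
    fix S assume "S \<in> Pow (E - {e})"
    then have "e \<notin> S" "finite S" using assms(1) finite_subset by auto
    then show "w S * prod y S + w (insert e S) * prod y (insert e S) =
      deletion e w S * prod y S + deletion e w (insert e S) * prod y (insert e S) +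
      y e * (contraction e w S * prod y S + contraction e w (insert e S) * prod y (insert e S))"
      by (simp add: deletion_def contraction_def)
  qed
qed

lemma Zpoly_fun_upd_eq:
  assumes "\<And>S. e \<in> S \<Longrightarrow> v S = 0"
  shows "Zpoly E v (y(e := t)) = Zpoly E v y"
  unfolding Zpoly_def
  by (intro sum.cong refl) (metis assms mult_zero_left prod.cong fun_upd_other)

lemma pderiv_var_Zpoly:
  assumes "finite E" "e \<in> E"
  shows "pderiv_var e (Zpoly E w) = Zpoly E (contraction e w)"
proof
  fix y
  have "Zpoly E w (y(e := t)) = Zpoly E (deletion e w) y + t * Zpoly E (contraction e w) y" for t
    using Zpoly_deletion_contraction[OF assms, of w "y(e := t)"]
    by (simp add: Zpoly_fun_upd_eq deletion_def contraction_def)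
  moreover have "((\<lambda>t. Zpoly E (deletion e w) y + t * Zpoly E (contraction e w) y)
      has_field_derivative Zpoly E (contraction e w) y) (at (y e))"
    by (auto intro!: derivative_eq_intros)
  ultimately show "pderiv_var e (Zpoly E w) y = Zpoly E (contraction e w) y"
    unfolding pderiv_var_def by (simp add: DERIV_imp_deriv)
qed

lemma contraction_deletion_commute:
  "e \<noteq> f \<Longrightarrow> contraction f (deletion e w) = deletion e (contraction f w)"
  by (auto simp: fun_eq_iff contraction_def deletion_def)

lemma contraction_commute: "contraction f (contraction e w) = contraction e (contraction f w)"
  by (auto simp: fun_eq_iff contraction_def insert_commute)

lemma rayleigh_difference_Zpoly:
  assumes "finite E" "e \<in> E" "f \<in> E" "e \<noteq> f"
  shows "pderiv_var e (Zpoly E w) y * pderiv_var f (Zpoly E w) y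
      - pderiv_var e (pderiv_var f (Zpoly E w)) y * Zpoly E w y
    = Zpoly E (deletion e (contraction f w)) y * Zpoly E (deletion f (contraction e w)) y
      - Zpoly E (deletion f (deletion e w)) y * Zpoly E (contraction e (contraction f w)) y"
proof -
  have split_e: "Zpoly E v y = Zpoly E (deletion e v) y + y e * Zpoly E (contraction e v) y" for v
    using Zpoly_deletion_contraction[OF assms(1,2)] .
  have split_f: "Zpoly E v y = Zpoly E (deletion f v) y + y f * Zpoly E (contraction f v) y" for v
    using Zpoly_deletion_contraction[OF assms(1,3)] .
  show ?thesis
    unfolding pderiv_var_Zpoly[OF assms(1,2)] pderiv_var_Zpoly[OF assms(1,3)]
      split_e[of w] split_f[of "deletion e w"] split_f[of "contraction e w"]
      split_e[of "contraction f w"] contraction_deletion_commute[OF assms(4)] contraction_commute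
    by (simp add: algebra_simps)
qed

lemma rayleigh_deletion_contraction_le:
  assumes "finite E" "rayleigh E (Zpoly E w)" "e \<in> E" "f \<in> E" "e \<noteq> f"
    and "\<forall>x\<in>E. y x > 0"
  shows "Zpoly E (deletion f (deletion e w)) y * Zpoly E (contraction e (contraction f w)) y
    \<le> Zpoly E (deletion e (contraction f w)) y * Zpoly E (deletion f (contraction e w)) y"
  using assms rayleigh_difference_Zpoly[OF assms(1,3-5), of w y] unfolding rayleigh_def by force

lemma deletion_nonneg: "\<forall>S\<in>Pow E. w S \<ge> 0 \<Longrightarrow> \<forall>S\<in>Pow E. deletion e w S \<ge> 0"
  by (auto simp: deletion_def)

lemma contraction_nonneg:
  "e \<in> E \<Longrightarrow> \<forall>S\<in>Pow E. w S \<ge> 0 \<Longrightarrow> \<forall>S\<in>Pow E. contraction e w S \<ge> 0"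
  by (auto simp: contraction_def)

lemma Zpoly_nonneg:
  assumes "\<forall>S\<in>Pow E. v S \<ge> 0" "\<forall>x\<in>E. y x \<ge> 0"
  shows "Zpoly E v y \<ge> 0"
  unfolding Zpoly_def using assms by (intro sum_nonneg mult_nonneg_nonneg prod_nonneg) auto

definition scale_on :: "'a set \<Rightarrow> real \<Rightarrow> 'a \<Rightarrow> real" where
  "scale_on X t x = (if x \<in> X then t else 1)"

lemma prod_scale_on: "finite S \<Longrightarrow> prod (scale_on X t) S = t ^ card (S \<inter> X)"
  by (simp add: scale_on_def prod.If_cases Int_def)

lemma Zpoly_scale_on_ge:
  assumes "finite E" "\<forall>S\<in>Pow E. v S \<ge> 0" "t \<ge> 0" "S \<subseteq> X" "S \<subseteq> E"
  shows "v S * t ^ card S \<le> Zpoly E v (scale_on X t)"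
proof -
  have "v S * t ^ card S = v S * prod (scale_on X t) S"
    using assms by (simp add: prod_scale_on Int_absorb2 finite_subset)
  also have "\<dots> \<le> Zpoly E v (scale_on X t)"
    unfolding Zpoly_def using assms
    by (intro member_le_sum[where f = "\<lambda>S. v S * prod (scale_on X t) S"]
        mult_nonneg_nonneg prod_nonneg) (auto simp: scale_on_def)
  finally show ?thesis .
qed

lemma Zpoly_scale_on_le:
  assumes "finite E" "\<forall>S\<in>Pow E. v S \<ge> 0" "t \<ge> 1"
    and "\<forall>S\<in>Pow E. v S \<noteq> 0 \<longrightarrow> card (S \<inter> X) < k"
  shows "t * Zpoly E v (scale_on X t) \<le> (\<Sum>S\<in>Pow E. v S) * t ^ k"
proof -
  have "t * Zpoly E v (scale_on X t) = (\<Sum>S\<in>Pow E. v S * t ^ Suc (card (S \<inter> X)))"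
    unfolding Zpoly_def sum_distrib_left
    using assms(1) by (intro sum.cong refl) (auto simp: prod_scale_on dest: finite_subset)
  also have "\<dots> \<le> (\<Sum>S\<in>Pow E. v S * t ^ k)"
  proof (rule sum_mono)
    fix S assume "S \<in> Pow E"
    then show "v S * t ^ Suc (card (S \<inter> X)) \<le> v S * t ^ k"
      using assms by (cases "v S = 0")
        (auto intro!: mult_left_mono power_increasing simp del: power_Suc)
  qed
  finally show ?thesis by (simp add: sum_distrib_right)
qed

lemma Zpoly_deletion_deletion_scale_on_ge:
  assumes "finite E" "\<forall>S\<in>Pow E. \<omega> S \<ge> 0" "X \<subseteq> E" "A \<subseteq> X" "e \<notin> A" "f \<notin> A" "t \<ge> 0"
  shows "\<omega> A * t ^ card A \<le> Zpoly E (deletion f (deletion e \<omega>)) (scale_on X t)"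
proof -
  have "deletion f (deletion e \<omega>) A = \<omega> A" using assms(5,6) by (simp add: deletion_def)
  then show ?thesis
    using Zpoly_scale_on_ge[OF assms(1) deletion_nonneg[OF deletion_nonneg[OF assms(2)]], of t A X f e]
      assms(3,4,7) by simp
qed

lemma Zpoly_contraction_contraction_scale_on_ge:
  assumes "finite E" "\<forall>S\<in>Pow E. \<omega> S \<ge> 0" "X \<subseteq> E" "B \<subseteq> X" "e \<in> B" "f \<in> B" "e \<noteq> f"
    and "t \<ge> 1" "k < card B"
  shows "\<omega> B * t ^ k \<le> t * Zpoly E (contraction e (contraction f \<omega>)) (scale_on X t)"
proof -
  define B' where "B' = B - {e, f}"
  have "finite B" using finite_subset[OF order_trans[OF assms(4,3)] assms(1)] .
  then have B: "B = insert f (insert e B')" "finite B'" "e \<notin> B'" "f \<notin> B'"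
    using assms(5,6) by (auto simp: B'_def)
  have "contraction e (contraction f \<omega>) B' = \<omega> B"
    using B assms(7) by (simp add: contraction_def insert_commute)
  moreover have "B' \<subseteq> X" using assms(4) by (auto simp: B'_def)
  moreover have nonneg: "\<forall>S\<in>Pow E. contraction e (contraction f \<omega>) S \<ge> 0"
    using assms(2-6) by (intro contraction_nonneg) auto
  ultimately have B'_term:
    "\<omega> B * t ^ card B' \<le> Zpoly E (contraction e (contraction f \<omega>)) (scale_on X t)"
    using Zpoly_scale_on_ge[OF assms(1) nonneg, of t B' X] assms(3,8) by auto
  have "k \<le> Suc (card B')" using assms(7,9) B by simp
  then have "t ^ k \<le> t * t ^ card B'" using assms(8) by (metis power_Suc power_increasing)
  then have "\<omega> B * t ^ k \<le> \<omega> B * (t * t ^ card B')"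
    using assms(2-4) by (intro mult_left_mono) auto
  also have "\<dots> = t * (\<omega> B * t ^ card B')" by simp
  also have "\<dots> \<le> t * Zpoly E (contraction e (contraction f \<omega>)) (scale_on X t)"
    using B'_term assms(8) by simp
  finally show ?thesis .
qed

lemma Zpoly_deletion_contraction_scale_on_le:
  assumes "finite E" "\<forall>S\<in>Pow E. \<omega> S \<ge> 0" "t \<ge> 1" "f \<in> E" "f \<in> X" "e \<noteq> f"
    and "\<And>S. S \<subseteq> E \<Longrightarrow> \<omega> S > 0 \<Longrightarrow> f \<in> S \<Longrightarrow> e \<notin> S \<Longrightarrow> card (S \<inter> X) \<le> k"
  shows "t * Zpoly E (deletion e (contraction f \<omega>)) (scale_on X t)
    \<le> (\<Sum>S\<in>Pow E. deletion e (contraction f \<omega>) S) * t ^ k"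
proof (rule Zpoly_scale_on_le)
  show "\<forall>S\<in>Pow E. deletion e (contraction f \<omega>) S \<ge> 0"
    using assms(2,4) by (intro deletion_nonneg contraction_nonneg)
  show "\<forall>S\<in>Pow E. deletion e (contraction f \<omega>) S \<noteq> 0 \<longrightarrow> card (S \<inter> X) < k"
  proof (intro ballI impI)
    fix S assume "S \<in> Pow E" "deletion e (contraction f \<omega>) S \<noteq> 0"
    then have S: "insert f S \<subseteq> E" "f \<notin> S" "e \<notin> insert f S" "\<omega> (insert f S) > 0"
      "finite S"
      using assms(1,2,4,6) finite_subset
      by (auto simp: deletion_def contraction_def less_le split: if_splits)
    then have "card (insert f S \<inter> X) \<le> k" using assms(7) by blast
    moreover have "insert f S \<inter> X = insert f (S \<inter> X)" using assms(5) by blast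
    ultimately show "card (S \<inter> X) < k" using S(2,5) by simp
  qed
qed (use assms in auto)

lemma rescaled_product_le:
  fixes a b c d \<alpha> \<beta> p q t T :: real
  assumes "a * d \<le> b * c" and "\<alpha> * T \<le> a" "\<beta> * T \<le> t * d"
    and "t * b \<le> p * T" "t * c \<le> q * T"
    and "0 \<le> \<alpha>" "0 \<le> \<beta>" "0 \<le> b" "0 \<le> c" "0 \<le> t" "0 < T"
  shows "t * (\<alpha> * \<beta>) \<le> p * q"
proof -
  have "0 \<le> a" using assms(2,6,11) by (meson mult_nonneg_nonneg less_imp_le order_trans)
  have "t * (\<alpha> * \<beta>) * T\<^sup>2 = t * ((\<alpha> * T) * (\<beta> * T))"
    by (simp add: power2_eq_square algebra_simps)
  also have "\<dots> \<le> t * (a * (t * d))"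
    using assms(6-11) \<open>0 \<le> a\<close> by (intro mult_left_mono mult_mono[OF assms(2,3)]) auto
  also have "\<dots> = t\<^sup>2 * (a * d)" by (simp add: power2_eq_square algebra_simps)
  also have "\<dots> \<le> t\<^sup>2 * (b * c)" using assms(1) by (simp add: mult_left_mono)
  also have "\<dots> = (t * b) * (t * c)" by (simp add: power2_eq_square algebra_simps)
  also have "\<dots> \<le> (p * T) * (q * T)"
    using assms(4,8-10) by (intro mult_mono[OF assms(4,5)]) (auto intro: order_trans[rotated])
  also have "\<dots> = p * q * T\<^sup>2" by (simp add: power2_eq_square algebra_simps)
  finally show ?thesis using assms(11) by simp
qed

lemma rayleigh_exchange_bound:
  fixes \<omega> :: "'a set \<Rightarrow> real"
  assumes E: "finite E" and nn: "\<forall>S\<in>Pow E. \<omega> S \<ge> 0" and ray: "rayleigh E (Zpoly E \<omega>)"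
    and X: "X \<subseteq> E" "A \<subseteq> X" "B \<subseteq> X"
    and e: "e \<in> B - A" and f: "f \<in> B - A" and "e \<noteq> f" and AB: "card A < card B"
    and e_only: "\<And>S. S \<subseteq> E \<Longrightarrow> \<omega> S > 0 \<Longrightarrow> e \<in> S \<Longrightarrow> f \<notin> S \<Longrightarrow>
      card (S \<inter> X) \<le> card A"
    and f_only: "\<And>S. S \<subseteq> E \<Longrightarrow> \<omega> S > 0 \<Longrightarrow> f \<in> S \<Longrightarrow> e \<notin> S \<Longrightarrow>
      card (S \<inter> X) \<le> card A"
    and t: "t \<ge> 1"
  shows "t * (\<omega> A * \<omega> B) \<le> (\<Sum>S\<in>Pow E. deletion e (contraction f \<omega>) S)
    * (\<Sum>S\<in>Pow E. deletion f (contraction e \<omega>) S)"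
proof -
  have eE: "e \<in> E" and fE: "f \<in> E" using e f X by auto
  define y where "y = scale_on X t"
  have ypos: "\<forall>x\<in>E. y x > 0" using t by (auto simp: y_def scale_on_def)
  define a where "a = Zpoly E (deletion f (deletion e \<omega>)) y"
  define b where "b = Zpoly E (deletion e (contraction f \<omega>)) y"
  define c where "c = Zpoly E (deletion f (contraction e \<omega>)) y"
  define d where "d = Zpoly E (contraction e (contraction f \<omega>)) y"
  have rayleigh_ineq: "a * d \<le> b * c"
    unfolding a_def b_def c_def d_def
    by (rule rayleigh_deletion_contraction_le[OF E ray eE fE \<open>e \<noteq> f\<close> ypos])
  have a_ge: "\<omega> A * t ^ card A \<le> a"
    unfolding a_def y_def using E nn X e f t by (intro Zpoly_deletion_deletion_scale_on_ge) auto
  have d_ge: "\<omega> B * t ^ card A \<le> t * d"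
    unfolding d_def y_def using E nn X e f \<open>e \<noteq> f\<close> t AB
    by (intro Zpoly_contraction_contraction_scale_on_ge) auto
  have b_le: "t * b \<le> (\<Sum>S\<in>Pow E. deletion e (contraction f \<omega>) S) * t ^ card A"
    unfolding b_def y_def using E nn t fE f X \<open>e \<noteq> f\<close> f_only
    by (intro Zpoly_deletion_contraction_scale_on_le) auto
  have c_le: "t * c \<le> (\<Sum>S\<in>Pow E. deletion f (contraction e \<omega>) S) * t ^ card A"
    unfolding c_def y_def using E nn t eE e X \<open>e \<noteq> f\<close> e_only
    by (intro Zpoly_deletion_contraction_scale_on_le) auto
  have "0 \<le> b" "0 \<le> c"
    using nn eE fE ypos unfolding b_def c_def
    by (auto intro!: Zpoly_nonneg simp: deletion_def contraction_def less_imp_le)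
  then show ?thesis
    using nn X t by (intro rescaled_product_le[OF rayleigh_ineq a_ge d_ge b_le c_le]) auto
qed

lemma rayleigh_exchange:
  fixes \<omega> :: "'a set \<Rightarrow> real"
  assumes "finite E" "\<forall>S\<in>Pow E. \<omega> S \<ge> 0" "rayleigh E (Zpoly E \<omega>)"
    and "X \<subseteq> E" "A \<subseteq> X" "B \<subseteq> X" and AB: "\<omega> A > 0" "\<omega> B > 0"
    and "e \<in> B - A" "f \<in> B - A" "e \<noteq> f"
    and "\<And>S. S \<subseteq> E \<Longrightarrow> \<omega> S > 0 \<Longrightarrow> e \<in> S \<Longrightarrow> f \<notin> S \<Longrightarrow> card (S \<inter> X) \<le> card A"
    and "\<And>S. S \<subseteq> E \<Longrightarrow> \<omega> S > 0 \<Longrightarrow> f \<in> S \<Longrightarrow> e \<notin> S \<Longrightarrow> card (S \<inter> X) \<le> card A"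
  shows "card B \<le> card A"
proof (rule ccontr)
  assume "\<not> card B \<le> card A"
  define p where "p = (\<Sum>S\<in>Pow E. deletion e (contraction f \<omega>) S)"
  define q where "q = (\<Sum>S\<in>Pow E. deletion f (contraction e \<omega>) S)"
  define t where "t = max 1 (p * q / (\<omega> A * \<omega> B) + 1)"
  have "t * (\<omega> A * \<omega> B) \<le> p * q"
    unfolding p_def q_def t_def using assms \<open>\<not> card B \<le> card A\<close>
    by (intro rayleigh_exchange_bound[of E \<omega> X A B e f]) auto
  moreover have "(p * q / (\<omega> A * \<omega> B) + 1) * (\<omega> A * \<omega> B) \<le> t * (\<omega> A * \<omega> B)"
    using AB by (intro mult_right_mono) (auto simp: t_def)
  moreover have "(p * q / (\<omega> A * \<omega> B) + 1) * (\<omega> A * \<omega> B) = p * q + \<omega> A * \<omega> B"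
    using AB by (simp add: field_simps)
  moreover have "\<omega> A * \<omega> B > 0" using AB by simp
  ultimately show False by linarith
qed

lemma minimal_exchange_counterexample:
  assumes "finite E" "Q \<subseteq> Pow E" "A0 \<in> Q" "B0 \<in> Q" "card A0 < card B0"
    and "\<forall>x\<in>B0 - A0. insert x A0 \<notin> Q"
  obtains X A B where "X \<subseteq> E" "A \<in> Q" "B \<in> Q" "A \<subseteq> X" "B \<subseteq> X" "card A < card B"
    "\<forall>x\<in>X - A. insert x A \<notin> Q"
    "\<forall>x\<in>X - A. \<forall>F\<in>Q. F \<subseteq> X - {x} \<longrightarrow> card F \<le> card A"
proof -
  define violated_in where "violated_in X \<longleftrightarrow> X \<subseteq> E \<and>
    (\<exists>A B. A \<in> Q \<and> B \<in> Q \<and> A \<subseteq> X \<and> B \<subseteq> X \<and> card A < card B \<and> (\<forall>x\<in>X - A. insert x A \<notin> Q))"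
    for X
  have "violated_in (A0 \<union> B0)"
    using assms unfolding violated_in_def by (intro conjI exI[of _ A0] exI[of _ B0]) auto
  then obtain X where "violated_in X" and min: "\<And>Y. violated_in Y \<Longrightarrow> card X \<le> card Y"
    using ex_has_least_nat[of violated_in _ card] by metis
  then obtain A B where XAB: "X \<subseteq> E" "A \<in> Q" "B \<in> Q" "A \<subseteq> X" "B \<subseteq> X" "card A < card B"
    "\<forall>x\<in>X - A. insert x A \<notin> Q"
    unfolding violated_in_def by blast
  have "card F \<le> card A" if x: "x \<in> X - A" and F: "F \<in> Q" "F \<subseteq> X - {x}" for x F
  proof (rule ccontr)
    assume "\<not> card F \<le> card A"
    then have "violated_in (X - {x})"
      unfolding violated_in_def using XAB x F by (intro conjI exI[of _ A] exI[of _ F]) auto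
    then have "card X \<le> card (X - {x})" by (rule min)
    moreover have "finite X" using finite_subset[OF XAB(1) assms(1)] .
    ultimately show False using x card_gt_0_iff[of X] by auto
  qed
  with XAB show ?thesis by (intro that) auto
qed

lemma two_new_elements:
  assumes "finite A" "card A < card B" "\<forall>x\<in>B - A. insert x A \<noteq> B"
  obtains e f where "e \<in> B - A" "f \<in> B - A" "e \<noteq> f"
proof -
  have "B - A \<noteq> {}" using assms(1,2) by (metis Diff_eq_empty_iff card_mono not_le)
  then obtain e where e: "e \<in> B - A" by blast
  have "\<not> B - A \<subseteq> {e}"
  proof
    assume "B - A \<subseteq> {e}"
    then have "B \<subseteq> insert e A" by blast
    moreover have "card (insert e A) \<le> card B" using e assms(1,2) by simp
    ultimately have "B = insert e A" using assms(1) by (simp add: card_seteq)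
    then show False using assms(3) e by blast
  qed
  then show ?thesis using e that by blast
qed

lemma rayleigh_support_exchange:
  fixes \<omega> :: "'a set \<Rightarrow> real"
  assumes E: "finite E" and nn: "\<forall>S\<in>Pow E. \<omega> S \<ge> 0" and ray: "rayleigh E (Zpoly E \<omega>)"
    and supp: "{S\<in>Pow E. \<omega> S > 0} = Q"
    and down: "\<And>S T. S \<in> Q \<Longrightarrow> T \<subseteq> S \<Longrightarrow> T \<in> Q"
    and A0B0: "A0 \<in> Q" "B0 \<in> Q" "card A0 < card B0"
  shows "\<exists>x\<in>B0 - A0. insert x A0 \<in> Q"
proof (rule ccontr)
  assume "\<not> ?thesis"
  then have no_exchange: "\<forall>x\<in>B0 - A0. insert x A0 \<notin> Q" by blast
  have "Q \<subseteq> Pow E" using supp by blast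
  obtain X A B
    where XAB: "X \<subseteq> E" "A \<in> Q" "B \<in> Q" "A \<subseteq> X" "B \<subseteq> X" "card A < card B"
    and max: "\<forall>x\<in>X - A. insert x A \<notin> Q"
    and small: "\<forall>x\<in>X - A. \<forall>F\<in>Q. F \<subseteq> X - {x} \<longrightarrow> card F \<le> card A"
    by (rule minimal_exchange_counterexample[OF E \<open>Q \<subseteq> Pow E\<close> A0B0 no_exchange])
  have "finite A" using finite_subset[OF order_trans[OF XAB(4,1)] E] .
  have "\<forall>x\<in>B - A. insert x A \<noteq> B" using max XAB(3,5) by blast
  then obtain e f where ef: "e \<in> B - A" "f \<in> B - A" "e \<noteq> f"
    by (rule two_new_elements[OF \<open>finite A\<close> XAB(6)])
  have bound: "card (S \<inter> X) \<le> card A"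
    if "S \<subseteq> E" "\<omega> S > 0" "x \<in> B - A" "x \<notin> S" for S x
  proof -
    have "S \<in> Q" using that(1,2) supp by blast
    then show ?thesis
      using that(3,4) XAB(5) by (intro small[rule_format] down[OF _ Int_lower1]) auto
  qed
  have "\<omega> A > 0" "\<omega> B > 0" using XAB(2,3) supp by auto
  then have "card B \<le> card A"
    using XAB(1,4,5) ef bound[of _ e] bound[of _ f]
    by (intro rayleigh_exchange[OF E nn ray, of X A B e f]) simp_all
  with XAB(6) show False by simp
qed

theorem corollary4p10:
  fixes E :: "'a set" and Q :: "'a set set"
  assumes "finite E"
    and "simplicial_complex E Q"
    and "weakly_rayleigh E Q"
  shows "matroid_indep E Q"
proof -
  obtain \<omega> :: "'a set \<Rightarrow> real" where nn: "\<forall>S\<in>Pow E. \<omega> S \<ge> 0"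
    and supp: "{S\<in>Pow E. \<omega> S > 0} = Q" and ray: "rayleigh E (Zpoly E \<omega>)"
    using assms(3) unfolding weakly_rayleigh_def by blast
  have QE: "Q \<subseteq> Pow E" and down: "\<And>S T. S \<in> Q \<Longrightarrow> T \<subseteq> S \<Longrightarrow> T \<in> Q"
    using assms(2) unfolding simplicial_complex_def by auto
  have "{} \<in> Q" using assms(2) down unfolding simplicial_complex_def by blast
  then show ?thesis
    unfolding matroid_indep_def
    using QE down rayleigh_support_exchange[OF assms(1) nn ray supp down] by auto
qed

end
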